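(* Let $G=(V,E)$ be a temporal network, let $\pi$ be an ordering of $V$, and let $\delta\ge 0$. Let $e=(u,v,t)\in E$ be a temporal edge with $\pi(u)<\pi(v)$, and let $w\in N^{+}_{\pi}(u)$ be a vertex adjacent to $v$ in $G_S$. Put $L_2=E_{u,w}$ and $L_3=E_{v,w}$. Let $L_{12}[e]$ be the first edge of $L_2$ (in sorted order) whose timestamp is at least $t(e)$, and for $f\in L_2$ let $L_{23}[f]$ be the first edge of $L_3$ whose timestamp is at least $t(f)$. Then $e$ forms at least one $\delta$-temporal triangle with $w$ if and only if $L_{12}[e]$ and $L_{23}[L_{12}[e]]$ exist and $$t(e)\le t(L_{12}[e])\le t(L_{23}[L_{12}[e]])\le t(e)+\delta.$$
   Context: A temporal network $G=(V,E)$ is a finite multiset of temporal edges $(x,y,t)$ with $x\neq y\in V$ and timestamp $t=t(e)\in\mathbb{R}$; the edge goes from $x$ to $y$, and parallel edges (in both directions) are allowed. For distinct $x,y\in V$, $E_{x,y}$ denotes the list of temporal edges from $x$ to $y$, sorted by increasing timestamp. $G_S$ is the underlying static graph: the simple undirected graph on $V$ with $\{x,y\}$ an edge iff there is at least one temporal edge between $x$ and $y$ (in either direction); $N(x)$ is the neighbourhood of $x$ in $G_S$. For an ordering $\pi$ of $V$, $N^{+}_{\pi}(x)=\{y\in N(x):\pi(x)<\pi(y)\}$. For $\delta\ge 0$, a temporal edge $e=(a,b,t)$ forms a $\delta$-temporal triangle with a vertex $c$ if there exist temporal edges $(a,c,t_2)$ and $(b,c,t_3)$ in $E$ with $t\le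 t_2\le t_3\le t+\delta$. *)

theory Defs
  imports Complex_Main "HOL-Library.Multiset"
begin

type_synonym 'v tedge = "'v \<times> 'v \<times> real"

definition src :: "'v tedge \<Rightarrow> 'v" where "src e = fst e"
definition dst :: "'v tedge \<Rightarrow> 'v" where "dst e = fst (snd e)"
definition time :: "'v tedge \<Rightarrow> real" where "time e = snd (snd e)"

definition temporal_network :: "'v set \<Rightarrow> 'v tedge multiset \<Rightarrow> bool" where
  "temporal_network V E \<longleftrightarrow> (\<forall>e\<in>#E. src e \<noteq> dst e \<and> src e \<in> V \<and> dst e \<in> V)"

text \<open>L is the list E_{x,y}: the temporal edges from x to y, sorted by increasing timestamp.\<close>
definition is_edge_list :: "'v tedge multiset \<Rightarrow> 'v \<Rightarrow> 'v \<Rightarrow> 'v tedge list \<Rightarrow> bool" where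
  "is_edge_list E x y L \<longleftrightarrow>
     mset L = filter_mset (\<lambda>e. src e = x \<and> dst e = y) E \<and> sorted (map time L)"

definition nbrs :: "'v tedge multiset \<Rightarrow> 'v \<Rightarrow> 'v set" where
  "nbrs E x = {y. y \<noteq> x \<and> (\<exists>e\<in>#E. (src e = x \<and> dst e = y) \<or> (src e = y \<and> dst e = x))}"

definition out_nbrs :: "'v tedge multiset \<Rightarrow> ('v \<Rightarrow> nat) \<Rightarrow> 'v \<Rightarrow> 'v set" where
  "out_nbrs E \<pi> x = {y \<in> nbrs E x. \<pi> x < \<pi> y}"

definition is_ordering :: "'v set \<Rightarrow> ('v \<Rightarrow> nat) \<Rightarrow> bool" where
  "is_ordering V \<pi> \<longleftrightarrow> inj_on \<pi> V"

definition forms_triangle :: "'v tedge multiset \<Rightarrow> real \<Rightarrow> 'v tedge \<Rightarrow> 'v \<Rightarrow> bool" where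
  "forms_triangle E \<delta> e c \<longleftrightarrow>
     (\<exists>t2 t3. (src e, c, t2) \<in># E \<and> (dst e, c, t3) \<in># E \<and>
              time e \<le> t2 \<and> t2 \<le> t3 \<and> t3 \<le> time e + \<delta>)"

definition first_geq :: "'v tedge list \<Rightarrow> real \<Rightarrow> 'v tedge option" where
  "first_geq L t = find (\<lambda>f. t \<le> time f) L"

end

theory Submission
  imports Defs
begin

text \<open>A triangle of e = (u,v,t) with w consists of an edge f in E_{u,w} and an edge g in
E_{v,w} with t \<le> t(f) \<le> t(g) \<le> t + \<delta>. Both lists are sorted, so replacing f by the first
edge of E_{u,w} at time \<ge> t only lowers t(f), and then replacing g by the first edge of
E_{v,w} at time \<ge> t(f) only lowers t(g); hence a triangle exists iff the greedy choice is one.\<close>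

lemma first_geq_SomeD:
  assumes "first_geq L t = Some f"
  shows "f \<in> set L" and "t \<le> time f"
  using assms unfolding first_geq_def by (metis find_Some_iff nth_mem)+

lemma sorted_first_geq_le:
  assumes "sorted (map time L)" and "x \<in> set L" and "t \<le> time x"
  obtains f where "first_geq L t = Some f" and "time f \<le> time x"
  using assms
proof (induction L)
  case Nil
  then show ?case by simp
next
  case (Cons a L)
  show ?case
  proof (cases "t \<le> time a")
    case True
    then have "first_geq (a # L) t = Some a" by (simp add: first_geq_def)
    moreover have "time a \<le> time x" using Cons.prems(2,3) by auto
    ultimately show ?thesis using Cons.prems(1) by blast
  next
    case False
    then have "first_geq (a # L) t = first_geq L t" and "x \<in> set L"
      using Cons.prems(3,4) by (auto simp: first_geq_def)
    then show ?thesis using Cons by auto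
  qed
qed

lemma ex_chain_iff_first_geq:
  assumes sorted2: "sorted (map time L2)" and sorted3: "sorted (map time L3)"
  shows "(\<exists>f\<in>set L2. \<exists>g\<in>set L3. a \<le> time f \<and> time f \<le> time g \<and> time g \<le> b) \<longleftrightarrow>
    (\<exists>f g. first_geq L2 a = Some f \<and> first_geq L3 (time f) = Some g \<and>
           a \<le> time f \<and> time f \<le> time g \<and> time g \<le> b)"
proof
  assume "\<exists>f\<in>set L2. \<exists>g\<in>set L3. a \<le> time f \<and> time f \<le> time g \<and> time g \<le> b"
  then obtain f g where "f \<in> set L2" "g \<in> set L3" "a \<le> time f" "time f \<le> time g" "time g \<le> b"
    by blast
  then obtain f' where f': "first_geq L2 a = Some f'" "time f' \<le> time f"
    using sorted_first_geq_le[OF sorted2] by metis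
  with \<open>time f \<le> time g\<close> \<open>g \<in> set L3\<close> obtain g' where g': "first_geq L3 (time f') = Some g'"
    "time g' \<le> time g"
    using sorted_first_geq_le[OF sorted3] by (metis order.trans)
  show "\<exists>f g. first_geq L2 a = Some f \<and> first_geq L3 (time f) = Some g \<and>
           a \<le> time f \<and> time f \<le> time g \<and> time g \<le> b"
    using f' g' first_geq_SomeD(2)[OF f'(1)] first_geq_SomeD(2)[OF g'(1)] \<open>time g \<le> b\<close>
    by fastforce
next
  assume "\<exists>f g. first_geq L2 a = Some f \<and> first_geq L3 (time f) = Some g \<and>
           a \<le> time f \<and> time f \<le> time g \<and> time g \<le> b"
  then show "\<exists>f\<in>set L2. \<exists>g\<in>set L3. a \<le> time f \<and> time f \<le> time g \<and> time g \<le> b"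
    by (metis first_geq_SomeD(1))
qed

lemma mem_edge_list_iff:
  assumes "is_edge_list E x y L"
  shows "f \<in> set L \<longleftrightarrow> f \<in># E \<and> src f = x \<and> dst f = y"
  using assms unfolding is_edge_list_def by (metis (mono_tags, lifting) mem_Collect_eq
    set_mset_filter set_mset_mset)

lemma tedge_collapse: "(src f, dst f, time f) = f"
  by (simp add: src_def dst_def time_def)

lemma forms_triangle_iff_edge_lists:
  assumes L2: "is_edge_list E (src e) c L2" and L3: "is_edge_list E (dst e) c L3"
  shows "forms_triangle E \<delta> e c \<longleftrightarrow>
    (\<exists>f\<in>set L2. \<exists>g\<in>set L3. time e \<le> time f \<and> time f \<le> time g \<and> time g \<le> time e + \<delta>)"
proof
  assume "forms_triangle E \<delta> e c"
  then obtain t2 t3 where "(src e, c, t2) \<in># E" "(dst e, c, t3) \<in># E"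
    "time e \<le> t2" "t2 \<le> t3" "t3 \<le> time e + \<delta>"
    unfolding forms_triangle_def by blast
  moreover from this have "(src e, c, t2) \<in> set L2" and "(dst e, c, t3) \<in> set L3"
    by (simp_all add: mem_edge_list_iff[OF L2] mem_edge_list_iff[OF L3] src_def dst_def)
  ultimately show "\<exists>f\<in>set L2. \<exists>g\<in>set L3.
      time e \<le> time f \<and> time f \<le> time g \<and> time g \<le> time e + \<delta>"
    by (intro bexI[of _ "(src e, c, t2)"] bexI[of _ "(dst e, c, t3)"]) (simp_all add: time_def)
next
  assume "\<exists>f\<in>set L2. \<exists>g\<in>set L3.
      time e \<le> time f \<and> time f \<le> time g \<and> time g \<le> time e + \<delta>"
  then obtain f g where "f \<in> set L2" "g \<in> set L3"
    "time e \<le> time f" "time f \<le> time g" "time g \<le> time e + \<delta>"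
    by blast
  moreover from this have "(src e, c, time f) \<in># E" and "(dst e, c, time g) \<in># E"
    using tedge_collapse[of f] tedge_collapse[of g]
    by (simp_all add: mem_edge_list_iff[OF L2] mem_edge_list_iff[OF L3])
  ultimately show "forms_triangle E \<delta> e c"
    unfolding forms_triangle_def by blast
qed

theorem theorem3p1:
  fixes V :: "'v set" and E :: "'v tedge multiset" and \<pi> :: "'v \<Rightarrow> nat"
    and \<delta> :: real and e :: "'v tedge" and u v w :: 'v and L2 L3 :: "'v tedge list"
  assumes "temporal_network V E"
    and "is_ordering V \<pi>"
    and "\<delta> \<ge> 0"
    and "e \<in># E" and "src e = u" and "dst e = v" and "\<pi> u < \<pi> v"
    and "w \<in> out_nbrs E \<pi> u" and "w \<in> nbrs E v"
    and "is_edge_list E u w L2" and "is_edge_list E v w L3"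
  shows "forms_triangle E \<delta> e w \<longleftrightarrow>
    (\<exists>f g. first_geq L2 (time e) = Some f \<and> first_geq L3 (time f) = Some g \<and>
           time e \<le> time f \<and> time f \<le> time g \<and> time g \<le> time e + \<delta>)"
proof -
  have "sorted (map time L2)" and "sorted (map time L3)"
    using assms(10,11) by (simp_all add: is_edge_list_def)
  moreover have "forms_triangle E \<delta> e w \<longleftrightarrow>
    (\<exists>f\<in>set L2. \<exists>g\<in>set L3. time e \<le> time f \<and> time f \<le> time g \<and> time g \<le> time e + \<delta>)"
    using forms_triangle_iff_edge_lists[of E e w L2 L3 \<delta>] assms(5,6,10,11) by simp
  ultimately show ?thesis
    by (simp only: ex_chain_iff_first_geq)
qed

end
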